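(* Let $\mathcal{G}_0$ be a real semisimple Lie algebra with Cartan decomposition $\mathcal{G}_0=\mathcal{T}_0+\mathcal{P}_0$, let $\mathcal{G}$ be its complexification and $\mathcal{G}_k=\mathcal{T}_0+i\mathcal{P}_0$ the associated compact real form of $\mathcal{G}$. Let $S$ be a finite abelian semigroup such that the expanded algebra $\mathcal{G}_{k,S}=S\otimes\mathcal{G}_k$ is compact (i.e. all eigenvalues $\xi_\alpha$ of the matrix $\mathbf{g}^S$ are positive). Then $\mathcal{G}_{0,S}=S\otimes\mathcal{G}_0=\mathcal{T}_{0,S}+\mathcal{P}_{0,S}$, with $\mathcal{T}_{0,S}=S\otimes\mathcal{T}_0=\mathrm{span}\{\lambda_\alpha\otimes X:X\in\mathcal{T}_0\}$ and $\mathcal{P}_{0,S}=S\otimes\mathcal{P}_0$, is a Cartan decomposition of the real Lie algebra $\mathcal{G}_{0,S}$.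
   Context: For a (real or complex) Lie algebra $\mathcal{L}$ with basis $\{X_i\}$, $[X_i,X_j]=C_{ij}^kX_k$, and a finite abelian semigroup $S=\{\lambda_\alpha\}$ with 2-selector $K_{\alpha\beta}^\gamma$ ($=1$ if $\lambda_\alpha\lambda_\beta=\lambda_\gamma$, else $0$), the $S$-expanded algebra $S\otimes\mathcal{L}$ has basis $\lambda_\alpha\otimes X_i$ (over the same field) and bracket $[\lambda_\alpha\otimes X_i,\lambda_\beta\otimes X_j]=K_{\alpha\beta}^\gamma C_{ij}^k\,\lambda_\gamma\otimes X_k$; $S\otimes\mathcal{G}$ is the complexification of $S\otimes\mathcal{G}_0$. The matrix $\mathbf{g}^S$ has entries $g^S_{\alpha\beta}=K_{\alpha\gamma}^\lambda K_{\beta\lambda}^\gamma$. A real semisimple Lie algebra is compact if its Killing form is negative definite. Cartan decomposition: if $\mathcal{L}_0$ is a real semisimple Lie algebra with complexification $\mathcal{L}$ and $\sigma$ the conjugation of $\mathcal{L}$ with respect to $\mathcal{L}_0$, a decomposition $\mathcal{L}_0=\mathcal{T}+\mathcal{P}$ with $\mathcal{T}$ a subalgebra is a Cartan decomposition if there exists a compact real form $\mathcal{L}_k$ of $\mathcal{L}$ with $\sigma(\mathcal{L}_k)\subset\mathcal{L}_k$, $\mathcal{T}=\mathcal{L}_0\cap\mathcal{L}_k$ and $\mathcal{P}=\mathcal{L}_0\cap(i\mathcal{L}_k)$. *)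

theory Defs
  imports "HOL-Analysis.Analysis"
begin

text \<open>A (real or complex) Lie algebra with basis indexed by the finite type 'i is
  represented by its coordinate space 'a^'i and structure constants C, with
  [X_i, X_j] = C i j k X_k (summation over k).\<close>

definition br :: "('i::finite \<Rightarrow> 'i \<Rightarrow> 'i \<Rightarrow> 'a::comm_ring_1) \<Rightarrow> 'a^'i \<Rightarrow> 'a^'i \<Rightarrow> 'a^'i" where
  "br C x y = (\<chi> k. \<Sum>i\<in>UNIV. \<Sum>j\<in>UNIV. x$i * y$j * C i j k)"

definition lie_constants :: "('i::finite \<Rightarrow> 'i \<Rightarrow> 'i \<Rightarrow> real) \<Rightarrow> bool" where
  "lie_constants C \<longleftrightarrow>
     (\<forall>i j k. C i j k = - C j i k) \<and>
     (\<forall>i j k m. (\<Sum>l\<in>UNIV. C i j l * C l k m + C j k l * C l i m + C k i l * C l j m) = 0)"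

text \<open>Complexification: complex structure constants are the real ones.\<close>
definition cC :: "('i \<Rightarrow> 'i \<Rightarrow> 'i \<Rightarrow> real) \<Rightarrow> 'i \<Rightarrow> 'i \<Rightarrow> 'i \<Rightarrow> complex" where
  "cC C i j k = complex_of_real (C i j k)"

definition emb :: "real^'i::finite \<Rightarrow> complex^'i" where
  "emb x = (\<chi> k. complex_of_real (x$k))"

definition conjv :: "complex^'i::finite \<Rightarrow> complex^'i" where
  "conjv z = (\<chi> k. cnj (z$k))"

definition imul :: "complex^'i::finite \<Rightarrow> complex^'i" where
  "imul z = (\<chi> k. \<i> * z$k)"

text \<open>A real Lie algebra is given as a real subspace V of a real vector space with a bracket b.\<close>

definition real_trace :: "'v::real_vector set \<Rightarrow> ('v \<Rightarrow> 'v) \<Rightarrow> real" where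
  "real_trace V f =
     (let B = (SOME B. B \<subseteq> V \<and> \<not> dependent B \<and> span B = V)
      in \<Sum>b\<in>B. representation B (f b) b)"

definition killing :: "'v::real_vector set \<Rightarrow> ('v \<Rightarrow> 'v \<Rightarrow> 'v) \<Rightarrow> 'v \<Rightarrow> 'v \<Rightarrow> real" where
  "killing V b x y = real_trace V (\<lambda>z. b x (b y z))"

definition real_subalgebra :: "'v::real_vector set \<Rightarrow> ('v \<Rightarrow> 'v \<Rightarrow> 'v) \<Rightarrow> 'v set \<Rightarrow> bool" where
  "real_subalgebra V b T \<longleftrightarrow> subspace T \<and> T \<subseteq> V \<and> (\<forall>x\<in>T. \<forall>y\<in>T. b x y \<in> T)"

definition semisimple_real :: "('i::finite \<Rightarrow> 'i \<Rightarrow> 'i \<Rightarrow> real) \<Rightarrow> bool" where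
  "semisimple_real C \<longleftrightarrow>
     (\<forall>x::real^'i. (\<forall>y. killing UNIV (br C) x y = 0) \<longrightarrow> x = 0)"

definition compact_real_lie :: "'v::real_vector set \<Rightarrow> ('v \<Rightarrow> 'v \<Rightarrow> 'v) \<Rightarrow> bool" where
  "compact_real_lie V b \<longleftrightarrow> (\<forall>x\<in>V. x \<noteq> 0 \<longrightarrow> killing V b x x < 0)"

definition real_form :: "('i::finite \<Rightarrow> 'i \<Rightarrow> 'i \<Rightarrow> real) \<Rightarrow> (complex^'i) set \<Rightarrow> bool" where
  "real_form C L \<longleftrightarrow>
     real_subalgebra UNIV (br (cC C)) L \<and>
     (\<forall>z. \<exists>a\<in>L. \<exists>b\<in>L. z = a + imul b) \<and>
     (\<forall>a\<in>L. imul a \<in> L \<longrightarrow> a = 0)"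

definition compact_real_form :: "('i::finite \<Rightarrow> 'i \<Rightarrow> 'i \<Rightarrow> real) \<Rightarrow> (complex^'i) set \<Rightarrow> bool" where
  "compact_real_form C L \<longleftrightarrow> real_form C L \<and> compact_real_lie L (br (cC C))"

text \<open>Cartan decomposition of the real semisimple Lie algebra real^'i (structure constants C),
  with complexification complex^'i, real form emb ` UNIV and conjugation conjv.\<close>
definition cartan_decomposition ::
  "('i::finite \<Rightarrow> 'i \<Rightarrow> 'i \<Rightarrow> real) \<Rightarrow> (real^'i) set \<Rightarrow> (real^'i) set \<Rightarrow> bool" where
  "cartan_decomposition C T P \<longleftrightarrow>
     semisimple_real C \<and>
     real_subalgebra UNIV (br C) T \<and>
     (\<forall>x. \<exists>t\<in>T. \<exists>p\<in>P. x = t + p) \<and>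
     (\<exists>Lk. compact_real_form C Lk \<and> conjv ` Lk \<subseteq> Lk \<and>
           emb ` T = range emb \<inter> Lk \<and>
           emb ` P = range emb \<inter> imul ` Lk)"

text \<open>Semigroup S = finite abelian semigroup type 's; basis \<lambda>_\<alpha> \<otimes> X_i indexed by ('s \<times> 'i).\<close>
definition selector :: "'s::ab_semigroup_mult \<Rightarrow> 's \<Rightarrow> 's \<Rightarrow> real" where
  "selector \<alpha> \<beta> \<gamma> = (if \<alpha> * \<beta> = \<gamma> then 1 else 0)"

definition expC :: "('i \<Rightarrow> 'i \<Rightarrow> 'i \<Rightarrow> real) \<Rightarrow> ('s::ab_semigroup_mult \<times> 'i) \<Rightarrow> ('s \<times> 'i) \<Rightarrow> ('s \<times> 'i) \<Rightarrow> real" where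
  "expC C a b c = selector (fst a) (fst b) (fst c) * C (snd a) (snd b) (snd c)"

definition comp :: "'a^('s::finite \<times> 'i::finite) \<Rightarrow> 's \<Rightarrow> 'a^'i" where
  "comp x \<alpha> = (\<chi> i. x$(\<alpha>, i))"

text \<open>S \<otimes> W = span {\<lambda>_\<alpha> \<otimes> X : X \<in> W} for a subspace W.\<close>
definition sexp :: "('a^'i::finite) set \<Rightarrow> ('a^('s::finite \<times> 'i)) set" where
  "sexp W = {x. \<forall>\<alpha>. comp x \<alpha> \<in> W}"

end

theory Submission
  imports Defs
begin

text \<open>
  The compact real form T0 + i P0 is the compact form Lk witnessing the Cartan decomposition
  (Lk is conjugation invariant, so each of its elements splits into a real part in T0 and an
  imaginary part in i P0). Everything in the definition of a Cartan decomposition is defined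
  componentwise along the basis of S, so S \<otimes> Lk is a conjugation invariant real form of the
  expanded complexification whose real and imaginary parts are S \<otimes> T0 and i (S \<otimes> P0); it is
  compact by hypothesis. The only property that is not componentwise is semisimplicity, which
  follows from the existence of a compact real form L: if x lies in the radical of the Killing
  form, then it lies in the radical of the real Killing form \<kappa> of the complexification; writing
  x = a + i b with a, b \<in> L, one finds \<kappa>(a + i b, a - i b) = 2 (\<kappa>_L(a, a) + \<kappa>_L(b, b)),
  which forces a = b = 0 by negative definiteness.
\<close>

section \<open>Traces of linear maps\<close>

lemma subspace_finite_basis_exists:
  fixes V :: "'v::euclidean_space set"
  assumes "subspace V"
  obtains B where "B \<subseteq> V" "independent B" "span B = V" "finite B"
proof -
  obtain B where "B \<subseteq> V" "independent B" "V \<subseteq> span B"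
    by (metis basis_exists)
  then show thesis
    using that assms by (metis independent_bound span_minimal subset_antisym)
qed

lemma some_basis_subspace:
  fixes V :: "'v::euclidean_space set"
  assumes "subspace V"
  defines "B \<equiv> SOME B. B \<subseteq> V \<and> \<not> dependent B \<and> span B = V"
  shows "B \<subseteq> V" "independent B" "span B = V" "finite B"
proof -
  have "B \<subseteq> V \<and> \<not> dependent B \<and> span B = V"
    unfolding B_def by (rule someI_ex) (meson assms subspace_finite_basis_exists)
  then show "B \<subseteq> V" "independent B" "span B = V" "finite B"
    using independent_bound by blast+
qed

lemma representation_sum_scale:
  fixes B :: "'v::real_vector set"
  assumes B: "independent B" and u: "\<And>c. c \<in> A \<Longrightarrow> u c \<in> span B"
  shows "representation B (\<Sum>c\<in>A. r c *\<^sub>R u c) b = (\<Sum>c\<in>A. r c * representation B (u c) b)"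
proof -
  have "representation B (\<Sum>c\<in>A. r c *\<^sub>R u c) b = (\<Sum>c\<in>A. representation B (r c *\<^sub>R u c) b)"
    using real_vector.representation_sum[OF B, of A "\<lambda>c. r c *\<^sub>R u c"] u
    by (simp add: real_vector.span_scale)
  also have "\<dots> = (\<Sum>c\<in>A. r c * representation B (u c) b)"
    using real_vector.representation_scale[OF B] u by simp
  finally show ?thesis .
qed

lemma linear_representation_expand:
  assumes f: "linear f" and B: "independent B" "finite B" and v: "v \<in> span B"
  shows "f v = (\<Sum>c\<in>B. representation B v c *\<^sub>R f c)"
proof -
  have "v = (\<Sum>c\<in>B. representation B v c *\<^sub>R c)"
    using real_vector.sum_representation_eq[OF B(1) v B(2) order_refl] by simp
  then show ?thesis
    by (metis (no_types, lifting) f linear_cmul real_vector.linear_sum sum.cong)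
qed

lemma trace_sum_basis_independent:
  fixes V :: "'v::euclidean_space set"
  assumes B1: "B1 \<subseteq> V" "independent B1" "span B1 = V"
    and B2: "B2 \<subseteq> V" "independent B2" "span B2 = V"
    and f: "linear f" "f ` V \<subseteq> V"
  shows "(\<Sum>b\<in>B1. representation B1 (f b) b) = (\<Sum>c\<in>B2. representation B2 (f c) c)"
proof -
  have fin: "finite B1" "finite B2" using B1 B2 independent_bound by auto
  have f1: "f c \<in> span B1" and f2: "f c \<in> span B2" if "c \<in> V" for c
    using that f B1 B2 by auto
  have "(\<Sum>b\<in>B1. representation B1 (f b) b)
      = (\<Sum>b\<in>B1. \<Sum>c\<in>B2. representation B2 b c * representation B1 (f c) b)"
  proof (rule sum.cong[OF refl])
    fix b assume "b \<in> B1"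
    then have "representation B1 (f b) b
        = representation B1 (\<Sum>c\<in>B2. representation B2 b c *\<^sub>R f c) b"
      using linear_representation_expand[OF f(1) B2(2) fin(2)] B1 B2 by auto
    also have "\<dots> = (\<Sum>c\<in>B2. representation B2 b c * representation B1 (f c) b)"
      by (rule representation_sum_scale[OF B1(2)]) (use f1 B2(1) in auto)
    finally show "representation B1 (f b) b = \<dots>" .
  qed
  also have "\<dots> = (\<Sum>c\<in>B2. \<Sum>b\<in>B1. representation B1 (f c) b * representation B2 b c)"
    by (subst sum.swap) (simp add: mult.commute)
  also have "\<dots> = (\<Sum>c\<in>B2. representation B2 (f c) c)"
  proof (rule sum.cong[OF refl])
    fix c assume "c \<in> B2"
    then have "representation B2 (f c) c
        = representation B2 (\<Sum>b\<in>B1. representation B1 (f c) b *\<^sub>R b) c"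
      using linear_representation_expand[OF linear_id B1(2) fin(1)] f1 B2(1) by auto
    also have "\<dots> = (\<Sum>b\<in>B1. representation B1 (f c) b * representation B2 b c)"
      by (rule representation_sum_scale[OF B2(2)]) (use B1 B2 in \<open>auto simp: span_base\<close>)
    finally show "(\<Sum>b\<in>B1. representation B1 (f c) b * representation B2 b c)
        = representation B2 (f c) c" by (rule sym)
  qed
  finally show ?thesis .
qed

lemma real_trace_basis:
  fixes V :: "'v::euclidean_space set"
  assumes "subspace V" "B \<subseteq> V" "independent B" "span B = V" "linear f" "f ` V \<subseteq> V"
  shows "real_trace V f = (\<Sum>b\<in>B. representation B (f b) b)"
  using some_basis_subspace[OF assms(1)] trace_sum_basis_independent[OF _ _ _ assms(2-6)]
  unfolding real_trace_def Let_def by blast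

lemma real_trace_add:
  fixes V :: "'v::euclidean_space set"
  assumes V: "subspace V" and "f ` V \<subseteq> V" "g ` V \<subseteq> V"
  shows "real_trace V (\<lambda>v. f v + g v) = real_trace V f + real_trace V g"
proof -
  define B where "B \<equiv> SOME B. B \<subseteq> V \<and> \<not> dependent B \<and> span B = V"
  note B = some_basis_subspace[OF V, folded B_def]
  have "representation B (f b + g b) b = representation B (f b) b + representation B (g b) b"
    if "b \<in> B" for b
    using that B assms(2,3) by (subst real_vector.representation_add) auto
  then show ?thesis
    unfolding real_trace_def Let_def B_def[symmetric] by (simp add: sum.distrib)
qed

lemma real_trace_zero: "real_trace V (\<lambda>_. 0) = 0"
  by (simp add: real_trace_def Let_def real_vector.representation_zero)

lemma representation_linear_image:
  fixes g :: "'a::real_vector \<Rightarrow> 'b::real_vector"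
  assumes g: "linear g" "inj g" and B: "independent B" "finite B"
    and v: "v \<in> span B" and b: "b \<in> B"
  shows "representation (g ` B) (g v) (g b) = representation B v b"
proof -
  have gB: "independent (g ` B)"
    using real_vector.linear_independent_injective_image[OF g(1) B(1)] g(2)
    by (meson inj_on_subset subset_UNIV)
  have "representation (g ` B) (g v) (g b)
      = (\<Sum>c\<in>B. representation B v c * representation (g ` B) (g c) (g b))"
    unfolding linear_representation_expand[OF g(1) B v]
    by (rule representation_sum_scale[OF gB]) (simp add: real_vector.span_base)
  also have "\<dots> = (\<Sum>c\<in>B. representation B v c * (if c = b then 1 else 0))"
    using real_vector.representation_basis[OF gB] g(2) by (intro sum.cong) (auto simp: inj_eq)
  also have "\<dots> = representation B v b"
    using b B(2) by (simp add: if_distrib cong: if_cong)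
  finally show ?thesis .
qed

lemma real_trace_linear_image:
  fixes g :: "'a::euclidean_space \<Rightarrow> 'b::euclidean_space"
  assumes g: "linear g" "inj g" and f: "linear f" and A: "linear A"
    and Ag: "\<And>x. A (g x) = g (f x)"
  shows "real_trace (range g) A = real_trace UNIV f"
proof -
  obtain B :: "'a set" where B: "independent B" "span B = UNIV" "finite B"
    using subspace_finite_basis_exists[OF subspace_UNIV] by metis
  have gB: "independent (g ` B)"
    using real_vector.linear_independent_injective_image[OF g(1) B(1)] g(2)
    by (meson inj_on_subset subset_UNIV)
  have sg: "span (g ` B) = range g"
    using span_linear_image[OF g(1), of B] B(2) by simp
  then have sub: "subspace (range g)"
    by (metis real_vector.subspace_span)
  have "real_trace (range g) A = (\<Sum>c\<in>g ` B. representation (g ` B) (A c) c)"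
    by (rule real_trace_basis[OF sub _ gB sg A]) (auto simp: Ag)
  also have "\<dots> = (\<Sum>b\<in>B. representation (g ` B) (g (f b)) (g b))"
    by (subst sum.reindex) (auto simp: Ag intro: inj_on_subset[OF g(2)])
  also have "\<dots> = (\<Sum>b\<in>B. representation B (f b) b)"
    using representation_linear_image[OF g B(1,3)] B(2) by simp
  also have "\<dots> = real_trace UNIV f"
    using real_trace_basis[OF subspace_UNIV _ B(1,2) f] by simp
  finally show ?thesis .
qed

section \<open>Real forms of complex coordinate spaces\<close>

lemma imul_imul [simp]: "imul (imul z) = - z"
  by (simp add: imul_def vec_eq_iff)

lemma imul_eq_iff [simp]: "imul x = imul y \<longleftrightarrow> x = y"
  by (simp add: imul_def vec_eq_iff)

lemma imul_zero [simp]: "imul 0 = 0"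
  by (simp add: imul_def vec_eq_iff)

lemma imul_add: "imul (x + y) = imul x + imul y"
  by (simp add: imul_def vec_eq_iff algebra_simps)

lemma imul_diff: "imul (x - y) = imul x - imul y"
  by (simp add: imul_def vec_eq_iff algebra_simps)

lemma imul_minus: "imul (- x) = - imul x"
  by (simp add: imul_def vec_eq_iff)

lemma imul_scaleR: "imul (r *\<^sub>R x) = r *\<^sub>R imul x"
  by (simp add: imul_def vec_eq_iff scaleR_conv_of_real)

lemma linear_imul: "linear imul"
  by (rule linearI) (simp_all add: imul_add imul_scaleR)

lemma inj_imul: "inj imul"
  by (simp add: inj_def)

lemma emb_eq_iff [simp]: "emb x = emb y \<longleftrightarrow> x = y"
  by (simp add: emb_def vec_eq_iff)

lemma inj_emb: "inj emb"
  by (simp add: inj_def)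

lemma linear_emb: "linear emb"
  by (rule linearI) (simp add: emb_def vec_eq_iff, simp add: emb_def vec_eq_iff of_real_def)

lemma emb_zero [simp]: "emb 0 = 0"
  by (simp add: emb_def vec_eq_iff)

lemma subspace_range_emb: "subspace (range emb)"
  using span_linear_image[OF linear_emb, of UNIV]
  by (metis real_vector.span_UNIV real_vector.subspace_span)

definition re :: "complex^'i::finite \<Rightarrow> real^'i" where
  "re z = (\<chi> k. Re (z $ k))"

definition im :: "complex^'i::finite \<Rightarrow> real^'i" where
  "im z = (\<chi> k. Im (z $ k))"

lemma emb_re_plus_imul_emb_im: "emb (re z) + imul (emb (im z)) = z"
  by (simp add: vec_eq_iff emb_def imul_def re_def im_def complex_eq_iff)

lemma conjv_eq_re_im: "conjv z = emb (re z) - imul (emb (im z))"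
  by (simp add: vec_eq_iff emb_def imul_def re_def im_def conjv_def complex_eq_iff)

lemma imul_emb_eq_emb_iff: "imul (emb a) = emb b \<longleftrightarrow> a = 0 \<and> b = 0"
  by (auto simp: vec_eq_iff emb_def imul_def complex_eq_iff)

definition real_form_space :: "(complex^'n::finite) set \<Rightarrow> bool" where
  "real_form_space L \<longleftrightarrow>
     subspace L \<and> (\<forall>z. \<exists>a\<in>L. \<exists>b\<in>L. z = a + imul b) \<and> (\<forall>a\<in>L. imul a \<in> L \<longrightarrow> a = 0)"

lemma real_form_iff:
  "real_form C L \<longleftrightarrow> real_form_space L \<and> (\<forall>x\<in>L. \<forall>y\<in>L. br (cC C) x y \<in> L)"
  by (auto simp: real_form_def real_form_space_def real_subalgebra_def)

lemma real_form_space_range_emb: "real_form_space (range emb)"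
  unfolding real_form_space_def
proof (intro conjI allI ballI impI)
  show "\<exists>a\<in>range emb. \<exists>b\<in>range emb. z = a + imul b" for z
    using emb_re_plus_imul_emb_im[of z] by (metis rangeI)
  show "a = 0" if "a \<in> range emb" "imul a \<in> range emb" for a
    using that by (auto simp: imul_emb_eq_emb_iff)
qed (rule subspace_range_emb)

lemma real_form_space_add_imul_eq_0:
  assumes L: "real_form_space L" and "x \<in> L" "y \<in> L" "x + imul y = 0"
  shows "x = 0" "y = 0"
proof -
  have "imul y = - x"
    using assms(4) by (simp add: eq_neg_iff_add_eq_0 add.commute)
  then have "imul y \<in> L"
    using L \<open>x \<in> L\<close> by (simp add: real_form_space_def real_vector.subspace_neg)
  then show "y = 0"
    using L \<open>y \<in> L\<close> by (simp add: real_form_space_def)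
  then show "x = 0"
    using assms(4) by simp
qed

lemma real_form_space_basis:
  assumes L: "real_form_space L" and B: "B \<subseteq> L" "independent B" "span B = L"
  shows "B \<inter> imul ` B = {}" "independent (B \<union> imul ` B)" "span (B \<union> imul ` B) = UNIV"
proof -
  have fin: "finite B"
    using B(2) independent_bound by blast
  have "0 \<notin> B"
    using B(2) real_vector.dependent_zero by blast
  then show disj: "B \<inter> imul ` B = {}"
    using L B(1) by (auto simp: real_form_space_def)
  have "z \<in> span (B \<union> imul ` B)" for z
  proof -
    obtain a b where "a \<in> L" "b \<in> L" "z = a + imul b"
      using L unfolding real_form_space_def by blast
    moreover have "imul ` L = span (imul ` B)"
      using span_linear_image[OF linear_imul, of B] B(3) by simp
    ultimately show ?thesis
      using B(3) real_vector.span_mono[of B "B \<union> imul ` B"]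
        real_vector.span_mono[of "imul ` B" "B \<union> imul ` B"]
      by (auto intro: real_vector.span_add)
  qed
  then show "span (B \<union> imul ` B) = UNIV"
    by auto
  show "independent (B \<union> imul ` B)"
    unfolding eucl.independent_explicit
  proof (intro conjI allI impI ballI)
    show "finite (B \<union> imul ` B)"
      using fin by simp
    fix c v assume sum0: "(\<Sum>v\<in>B \<union> imul ` B. c v *\<^sub>R v) = 0" and v: "v \<in> B \<union> imul ` B"
    define x where "x = (\<Sum>b\<in>B. c b *\<^sub>R b)"
    define y where "y = (\<Sum>b\<in>B. c (imul b) *\<^sub>R b)"
    have "(\<Sum>v\<in>B \<union> imul ` B. c v *\<^sub>R v) = x + (\<Sum>b\<in>B. c (imul b) *\<^sub>R imul b)"
      unfolding x_def using disj fin
      by (simp add: sum.union_disjoint sum.reindex inj_on_subset[OF inj_imul])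
    also have "\<dots> = x + imul y"
      unfolding y_def by (simp add: real_vector.linear_sum[OF linear_imul] imul_scaleR)
    finally have "x + imul y = 0"
      using sum0 by simp
    moreover have "x \<in> span B" "y \<in> span B"
      unfolding x_def y_def
      by (intro real_vector.span_sum real_vector.span_scale real_vector.span_base; simp)+
    ultimately have "x = 0" "y = 0"
      using real_form_space_add_imul_eq_0[OF L] B(3) by blast+
    moreover have indep: "\<forall>b\<in>B. d b = 0" if "(\<Sum>b\<in>B. d b *\<^sub>R b) = 0" for d
      using B(2) that unfolding eucl.independent_explicit by blast
    ultimately have "\<forall>b\<in>B. c b = 0" "\<forall>b\<in>B. c (imul b) = 0"
      unfolding x_def y_def using indep[of c] indep[of "\<lambda>b. c (imul b)"] by simp_all
    then show "c v = 0"
      using v by auto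
  qed
qed

text \<open>In the basis B \<union> i B of complex^'n adapted to L, an operator commuting with i and
  preserving L has two equal diagonal blocks, while i times it has zero diagonal blocks.\<close>
lemma real_trace_complexification:
  fixes L :: "(complex^'n::finite) set"
  assumes L: "real_form_space L" and A: "linear A" "A ` L \<subseteq> L" "\<And>z. A (imul z) = imul (A z)"
  shows "real_trace UNIV A = 2 * real_trace L A"
    and "real_trace UNIV (\<lambda>z. imul (A z)) = 0"
proof -
  have subL: "subspace L"
    using L by (simp add: real_form_space_def)
  obtain B where B: "B \<subseteq> L" "independent B" "span B = L" "finite B"
    using subspace_finite_basis_exists[OF subL] by metis
  define B' where "B' = B \<union> imul ` B"
  note B' = real_form_space_basis[OF L B(1-3), folded B'_def]
  have sum_B': "(\<Sum>c\<in>B'. h c) = (\<Sum>b\<in>B. h b) + (\<Sum>b\<in>B. h (imul b))" for h :: "_ \<Rightarrow> real"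
    unfolding B'_def using B'(1) B(4)
    by (simp add: sum.union_disjoint sum.reindex inj_on_subset[OF inj_imul])
  have rep_L: "representation B' v = representation B v" if "v \<in> L" for v
    using real_vector.representation_extend[OF B'(2), of v B] that B B'_def by auto
  have rep_iL: "representation B' (imul v) = representation (imul ` B) (imul v)" if "v \<in> L" for v
    using real_vector.representation_extend[OF B'(2), of "imul v" "imul ` B"] that B B'_def
      span_linear_image[OF linear_imul, of B] by auto
  have rep_iL_imul: "representation (imul ` B) (imul v) (imul b) = representation B v b"
    if "v \<in> L" "b \<in> B" for v b
    using representation_linear_image[OF linear_imul inj_imul B(2,4)] that B by auto
  have off_B: "representation B v (imul b) = 0" "representation (imul ` B) v b = 0"
    if "b \<in> B" for v b
    using that B'(1) real_vector.representation_ne_zero by blast+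
  have AB: "A b \<in> L" if "b \<in> B" for b
    using that B(1) A(2) by blast
  then have minus_AB: "- A b \<in> L" if "b \<in> B" for b
    using that subL real_vector.subspace_neg by blast
  have tr: "real_trace UNIV F = (\<Sum>c\<in>B'. representation B' (F c) c)" if "linear F" for F
    using real_trace_basis[OF subspace_UNIV _ B'(2,3) that] by simp
  have "(\<Sum>b\<in>B. representation B' (A b) b) = (\<Sum>b\<in>B. representation B (A b) b)"
    by (rule sum.cong) (simp_all add: AB rep_L)
  moreover have "(\<Sum>b\<in>B. representation B' (A (imul b)) (imul b))
      = (\<Sum>b\<in>B. representation B (A b) b)"
    by (rule sum.cong) (simp_all add: A(3) AB rep_iL rep_iL_imul)
  ultimately show "real_trace UNIV A = 2 * real_trace L A"
    unfolding tr[OF A(1)] real_trace_basis[OF subL B(1-3) A(1,2)] sum_B' by simp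
  have "(\<Sum>b\<in>B. representation B' (imul (A b)) b) = 0"
    by (rule sum.neutral) (simp add: AB rep_iL off_B)
  moreover have "(\<Sum>b\<in>B. representation B' (imul (A (imul b))) (imul b)) = 0"
    by (rule sum.neutral) (simp add: A(3) minus_AB rep_L off_B)
  moreover have "linear (\<lambda>z. imul (A z))"
    using linear_compose[OF A(1) linear_imul] by (simp add: o_def)
  ultimately show "real_trace UNIV (\<lambda>z. imul (A z)) = 0"
    using tr sum_B' by simp
qed

section \<open>Killing forms of complexifications\<close>

lemma br_add_left: "br K (x + y) z = br K x z + br K y z"
  by (simp add: br_def vec_eq_iff algebra_simps sum.distrib)

lemma br_add_right: "br K z (x + y) = br K z x + br K z y"
  by (simp add: br_def vec_eq_iff algebra_simps sum.distrib)

lemma br_diff_left: "br K (x - y) z = br K x z - br K y z"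
  by (simp add: br_def vec_eq_iff algebra_simps sum_subtractf)

lemma br_diff_right: "br K z (x - y) = br K z x - br K z y"
  by (simp add: br_def vec_eq_iff algebra_simps sum_subtractf)

lemma br_scaleR_right: "br K z (r *\<^sub>R x) = r *\<^sub>R br K z x"
  for K :: "'i::finite \<Rightarrow> 'i \<Rightarrow> 'i \<Rightarrow> 'a::{real_algebra_1, comm_ring_1}"
  by (simp add: br_def vec_eq_iff scaleR_sum_right)

lemma linear_br: "linear (br K z)"
  for K :: "'i::finite \<Rightarrow> 'i \<Rightarrow> 'i \<Rightarrow> 'a::{real_algebra_1, comm_ring_1}"
  by (rule linearI) (simp_all add: br_add_right br_scaleR_right)

lemma linear_br_br: "linear (\<lambda>u. br K z (br K w u))"
  for K :: "'i::finite \<Rightarrow> 'i \<Rightarrow> 'i \<Rightarrow> 'a::{real_algebra_1, comm_ring_1}"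
  using linear_compose[OF linear_br linear_br] by (simp add: o_def)

lemma br_imul_left: "br K (imul x) z = imul (br K x z)"
  by (simp add: br_def imul_def vec_eq_iff sum_distrib_left algebra_simps)

lemma br_imul_right: "br K z (imul x) = imul (br K z x)"
  by (simp add: br_def imul_def vec_eq_iff sum_distrib_left algebra_simps)

lemma br_zero_left [simp]: "br K 0 z = 0"
  by (simp add: br_def vec_eq_iff)

lemma emb_br: "emb (br C x y) = br (cC C) (emb x) (emb y)"
  by (simp add: br_def emb_def cC_def vec_eq_iff)

lemma killing_add_right:
  "killing UNIV (br K) z (w1 + w2) = killing UNIV (br K) z w1 + killing UNIV (br K) z w2"
  for K :: "'i::finite \<Rightarrow> 'i \<Rightarrow> 'i \<Rightarrow> complex"
  unfolding killing_def br_add_left br_add_right by (rule real_trace_add) auto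

lemma killing_complexification_emb:
  "killing UNIV (br (cC D)) (emb x) (emb y) = 2 * killing UNIV (br D) x y"
proof -
  let ?A = "\<lambda>u. br (cC D) (emb x) (br (cC D) (emb y) u)"
  have A_emb: "?A (emb u) = emb (br D x (br D y u))" for u
    by (simp add: emb_br)
  have "killing UNIV (br D) x y = real_trace (range emb) ?A"
    unfolding killing_def
    by (rule real_trace_linear_image[OF linear_emb inj_emb linear_br_br linear_br_br, symmetric])
       (rule A_emb)
  moreover have "real_trace UNIV ?A = 2 * real_trace (range emb) ?A"
    by (rule real_trace_complexification[OF real_form_space_range_emb linear_br_br])
       (auto simp: A_emb br_imul_right)
  ultimately show ?thesis
    by (simp add: killing_def)
qed

lemma killing_complexification_emb_imul:
  "killing UNIV (br (cC D)) (emb x) (imul (emb y)) = 0"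
proof -
  let ?A = "\<lambda>u. br (cC D) (emb x) (br (cC D) (emb y) u)"
  have "?A ` range emb \<subseteq> range emb"
    by (auto simp flip: emb_br)
  then have "real_trace UNIV (\<lambda>u. imul (?A u)) = 0"
    by (rule real_trace_complexification[OF real_form_space_range_emb linear_br_br])
       (simp add: br_imul_right)
  then show ?thesis
    by (simp add: killing_def br_imul_left br_imul_right)
qed

text \<open>Degeneracy of the Killing form of a real Lie algebra passes to the real Killing form of its
  complexification, since the latter is spanned by the real elements and i times them.\<close>
lemma killing_complexification_degenerate:
  assumes "\<forall>y. killing UNIV (br D) x y = 0"
  shows "killing UNIV (br (cC D)) (emb x) w = 0"
  using emb_re_plus_imul_emb_im[of w] assms
  by (metis killing_add_right killing_complexification_emb killing_complexification_emb_imul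
      add.right_neutral mult_zero_right)

lemma killing_complexification_real_form:
  assumes L: "real_form D L" and "z \<in> L"
  shows "killing UNIV (br (cC D)) z z = 2 * killing L (br (cC D)) z z"
  unfolding killing_def using L \<open>z \<in> L\<close>
  by (intro real_trace_complexification(1)) (auto simp: real_form_iff linear_br_br br_imul_right)

lemma killing_complexification_conj_pair:
  assumes L: "real_form D L" and a: "a \<in> L" and b: "b \<in> L"
  shows "killing UNIV (br (cC D)) (a + imul b) (a - imul b)
       = 2 * (killing L (br (cC D)) a a + killing L (br (cC D)) b b)"
proof -
  let ?b = "br (cC D)"
  define M where "M u = ?b b (?b a u) - ?b a (?b b u)" for u
  have L_space: "real_form_space L" and L_closed: "\<forall>x\<in>L. \<forall>y\<in>L. ?b x y \<in> L"
    using L by (auto simp: real_form_iff)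
  then have L_sub: "subspace L"
    by (simp add: real_form_space_def)
  have "linear M"
    unfolding M_def by (intro linear_compose_sub linear_br_br)
  moreover have "M ` L \<subseteq> L"
    using L_sub L_closed a b by (auto simp: M_def intro!: real_vector.subspace_diff)
  moreover have "M (imul u) = imul (M u)" for u
    by (simp add: M_def br_imul_right imul_diff)
  ultimately have trace_iM: "real_trace UNIV (\<lambda>u. imul (M u)) = 0"
    by (rule real_trace_complexification(2)[OF L_space])
  have "?b (a + imul b) (?b (a - imul b) u)
      = (?b a (?b a u) + ?b b (?b b u)) + imul (M u)" for u
    by (simp add: M_def br_add_left br_diff_right br_imul_left br_imul_right
        br_add_right br_diff_left imul_diff imul_add algebra_simps)
  then have "killing UNIV ?b (a + imul b) (a - imul b)
      = killing UNIV ?b a a + killing UNIV ?b b b + real_trace UNIV (\<lambda>u. imul (M u))"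
    unfolding killing_def by (simp add: real_trace_add)
  then show ?thesis
    using trace_iM killing_complexification_real_form[OF L] a b by simp
qed

lemma semisimple_of_compact_real_form:
  assumes "compact_real_form D L"
  shows "semisimple_real D"
  unfolding semisimple_real_def
proof (intro allI impI)
  let ?b = "br (cC D)"
  fix x :: "real^_"
  assume "\<forall>y. killing UNIV (br D) x y = 0"
  then have degenerate: "killing UNIV ?b (emb x) w = 0" for w
    by (rule killing_complexification_degenerate)
  have L: "real_form D L" and neg: "\<forall>z\<in>L. z \<noteq> 0 \<longrightarrow> killing L ?b z z < 0"
    using assms by (auto simp: compact_real_form_def compact_real_lie_def)
  obtain a b where ab: "a \<in> L" "b \<in> L" "emb x = a + imul b"
    using L unfolding real_form_iff real_form_space_def by blast
  have sum_0: "killing L ?b a a + killing L ?b b b = 0"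
    using killing_complexification_conj_pair[OF L ab(1,2)] degenerate[of "a - imul b"] ab(3)
    by simp
  have "killing L ?b 0 0 = 0"
    by (simp add: killing_def real_trace_zero)
  then have nonpos: "killing L ?b z z \<le> 0" if "z \<in> L" for z
    using neg that by (cases "z = 0") (auto intro: less_imp_le)
  have "a = 0"
    using neg ab(1) nonpos[OF ab(2)] sum_0 by (metis add_neg_nonpos less_irrefl)
  moreover have "b = 0"
    using neg ab(2) nonpos[OF ab(1)] sum_0 by (metis add_nonpos_neg less_irrefl)
  ultimately show "x = 0"
    using ab(3) emb_eq_iff[of x 0] by simp
qed

section \<open>S-expansion\<close>

lemma comp_ext: "(\<And>\<alpha>. comp x \<alpha> = comp y \<alpha>) \<Longrightarrow> x = y"
  by (simp add: Defs.comp_def vec_eq_iff)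

lemma comp_add: "comp (x + y) \<alpha> = comp x \<alpha> + comp y \<alpha>"
  by (simp add: Defs.comp_def vec_eq_iff)

lemma comp_scaleR: "comp (r *\<^sub>R x) \<alpha> = r *\<^sub>R comp x \<alpha>"
  by (simp add: Defs.comp_def vec_eq_iff)

lemma comp_zero: "comp 0 \<alpha> = 0"
  by (simp add: Defs.comp_def vec_eq_iff)

lemma comp_emb: "comp (emb x) \<alpha> = emb (comp x \<alpha>)"
  by (simp add: Defs.comp_def emb_def vec_eq_iff)

lemma comp_imul: "comp (imul x) \<alpha> = imul (comp x \<alpha>)"
  by (simp add: Defs.comp_def imul_def vec_eq_iff)

lemma comp_conjv: "comp (conjv x) \<alpha> = conjv (comp x \<alpha>)"
  by (simp add: Defs.comp_def conjv_def vec_eq_iff)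

definition of_comps :: "('s::finite \<Rightarrow> 'a^'i::finite) \<Rightarrow> 'a^('s \<times> 'i)" where
  "of_comps f = (\<chi> p. f (fst p) $ snd p)"

lemma comp_of_comps [simp]: "comp (of_comps f) \<alpha> = f \<alpha>"
  by (simp add: Defs.comp_def of_comps_def vec_eq_iff)

lemma mem_sexp_iff: "x \<in> sexp W \<longleftrightarrow> (\<forall>\<alpha>. comp x \<alpha> \<in> W)"
  by (simp add: sexp_def)

lemma sexp_UNIV [simp]: "sexp UNIV = UNIV"
  by (simp add: sexp_def)

lemma sexp_Int: "sexp (A \<inter> B) = sexp A \<inter> sexp B"
  by (auto simp: sexp_def)

lemma image_sexp:
  fixes F :: "'a^('s::finite \<times> 'i::finite) \<Rightarrow> 'b^('s \<times> 'i)"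
  assumes "\<And>x \<alpha>. comp (F x) \<alpha> = f (comp x \<alpha>)"
  shows "F ` sexp W = sexp (f ` W)"
proof (intro equalityI subsetI)
  fix z :: "'b^('s \<times> 'i)" assume "z \<in> sexp (f ` W)"
  then obtain g :: "'s \<Rightarrow> 'a^'i" where g: "\<And>\<alpha>. g \<alpha> \<in> W" "\<And>\<alpha>. comp z \<alpha> = f (g \<alpha>)"
    unfolding mem_sexp_iff image_iff by metis
  then have "z = F (of_comps g)"
    by (intro comp_ext) (simp add: assms)
  moreover have "of_comps g \<in> sexp W"
    using g by (simp add: mem_sexp_iff)
  ultimately show "z \<in> F ` sexp W"
    by blast
qed (auto simp: mem_sexp_iff assms)

lemma sexp_range_emb: "(sexp (range emb) :: (complex^('s::finite \<times> 'i::finite)) set) = range emb"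
proof -
  have "emb ` sexp UNIV = (sexp (range emb) :: (complex^('s \<times> 'i)) set)"
    by (rule image_sexp[OF comp_emb])
  then show ?thesis
    by simp
qed

lemma sexp_decompose:
  assumes AB: "\<forall>w. \<exists>a\<in>A. \<exists>b\<in>B. w = h a b"
    and H: "\<And>x y \<alpha>. comp (H x y) \<alpha> = h (comp x \<alpha>) (comp y \<alpha>)"
  shows "\<exists>a\<in>sexp A. \<exists>b\<in>sexp B. z = H a b"
proof -
  obtain fa fb where f: "\<And>w. fa w \<in> A" "\<And>w. fb w \<in> B" "\<And>w. w = h (fa w) (fb w)"
    using AB by metis
  let ?a = "of_comps (\<lambda>\<alpha>. fa (comp z \<alpha>))" and ?b = "of_comps (\<lambda>\<alpha>. fb (comp z \<alpha>))"
  have "z = H ?a ?b"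
    by (rule comp_ext) (simp add: H flip: f(3))
  moreover have "?a \<in> sexp A" "?b \<in> sexp B"
    by (simp_all add: mem_sexp_iff f)
  ultimately show ?thesis
    by blast
qed

lemma subspace_sexp:
  fixes W :: "('a::real_vector^'i::finite) set"
  assumes "subspace W"
  shows "subspace (sexp W :: ('a^('s::finite \<times> 'i)) set)"
  using assms unfolding subspace_def
  by (auto simp: mem_sexp_iff comp_add comp_scaleR comp_zero)

lemma comp_br_expansion:
  fixes K :: "'i::finite \<Rightarrow> 'i \<Rightarrow> 'i \<Rightarrow> 'a::comm_ring_1"
    and E :: "('s::{finite,ab_semigroup_mult} \<times> 'i) \<Rightarrow> ('s \<times> 'i) \<Rightarrow> ('s \<times> 'i) \<Rightarrow> 'a"
  assumes E: "\<And>a b c. E a b c = (if fst a * fst b = fst c then 1 else 0) * K (snd a) (snd b) (snd c)"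
  shows "comp (br E x y) \<gamma>
       = (\<Sum>\<alpha>\<in>UNIV. \<Sum>\<beta>\<in>UNIV. if \<alpha> * \<beta> = \<gamma> then br K (comp x \<alpha>) (comp y \<beta>) else 0)"
proof -
  have sum_pairs: "(\<Sum>p\<in>UNIV. f p) = (\<Sum>\<alpha>\<in>UNIV. \<Sum>i\<in>UNIV. f (\<alpha>, i))"
    for f :: "'s \<times> 'i \<Rightarrow> 'a"
    by (simp only: sum.cartesian_product) simp
  have "br E x y $ (\<gamma>, k) = (\<Sum>\<alpha>\<in>UNIV. \<Sum>i\<in>UNIV. \<Sum>\<beta>\<in>UNIV. \<Sum>j\<in>UNIV.
      x $ (\<alpha>, i) * y $ (\<beta>, j) * ((if \<alpha> * \<beta> = \<gamma> then 1 else 0) * K i j k))" for k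
    by (simp add: br_def E sum_pairs)
  also have "\<dots> k = (\<Sum>\<alpha>\<in>UNIV. \<Sum>\<beta>\<in>UNIV. \<Sum>i\<in>UNIV. \<Sum>j\<in>UNIV.
      x $ (\<alpha>, i) * y $ (\<beta>, j) * ((if \<alpha> * \<beta> = \<gamma> then 1 else 0) * K i j k))" for k
    by (rule sum.cong[OF refl], rule sum.swap)
  also have "\<dots> k = (\<Sum>\<alpha>\<in>UNIV. \<Sum>\<beta>\<in>UNIV.
      (if \<alpha> * \<beta> = \<gamma> then br K (comp x \<alpha>) (comp y \<beta>) else 0) $ k)" for k
    by (intro sum.cong refl) (simp add: br_def Defs.comp_def)
  finally show ?thesis
    by (simp add: Defs.comp_def vec_eq_iff sum_component)
qed

lemma sexp_br_closed:
  fixes W :: "('a::real_vector^'i::finite) set"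
    and B :: "'a^('s::{finite,ab_semigroup_mult} \<times> 'i) \<Rightarrow> _ \<Rightarrow> _"
  assumes W: "subspace W" "\<forall>x\<in>W. \<forall>y\<in>W. b x y \<in> W"
    and B: "\<And>x y \<gamma>. comp (B x y) \<gamma>
              = (\<Sum>\<alpha>\<in>UNIV. \<Sum>\<beta>\<in>UNIV. if \<alpha> * \<beta> = \<gamma> then b (comp x \<alpha>) (comp y \<beta>) else 0)"
  shows "\<forall>x\<in>sexp W. \<forall>y\<in>sexp W. B x y \<in> sexp W"
proof (intro ballI)
  fix x y :: "'a^('s \<times> 'i)" assume "x \<in> sexp W" "y \<in> sexp W"
  then show "B x y \<in> sexp W"
    unfolding mem_sexp_iff B using W by (auto intro!: real_vector.subspace_sum real_vector.subspace_0)
qed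

lemma comp_br_expC:
  "comp (br (expC C) x y) \<gamma>
     = (\<Sum>\<alpha>\<in>UNIV. \<Sum>\<beta>\<in>UNIV. if \<alpha> * \<beta> = \<gamma> then br C (comp x \<alpha>) (comp y \<beta>) else 0)"
  by (rule comp_br_expansion) (simp add: expC_def selector_def)

lemma comp_br_cC_expC:
  "comp (br (cC (expC C)) x y) \<gamma>
     = (\<Sum>\<alpha>\<in>UNIV. \<Sum>\<beta>\<in>UNIV. if \<alpha> * \<beta> = \<gamma> then br (cC C) (comp x \<alpha>) (comp y \<beta>) else 0)"
  by (rule comp_br_expansion) (simp add: expC_def selector_def cC_def)

lemma real_subalgebra_sexp:
  assumes "real_subalgebra UNIV (br C) T"
  shows "real_subalgebra UNIV (br (expC C)) (sexp T :: (real^('s::{finite,ab_semigroup_mult} \<times> 'i::finite)) set)"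
proof -
  have "subspace T" "\<forall>x\<in>T. \<forall>y\<in>T. br C x y \<in> T"
    using assms by (auto simp: real_subalgebra_def)
  then show ?thesis
    unfolding real_subalgebra_def using subspace_sexp sexp_br_closed[OF _ _ comp_br_expC] by blast
qed

lemma real_form_sexp:
  assumes "real_form C L"
  shows "real_form (expC C) (sexp L :: (complex^('s::{finite,ab_semigroup_mult} \<times> 'i::finite)) set)"
proof -
  have L: "subspace L" "\<forall>z. \<exists>a\<in>L. \<exists>b\<in>L. z = a + imul b" "\<forall>a\<in>L. imul a \<in> L \<longrightarrow> a = 0"
    and closed: "\<forall>x\<in>L. \<forall>y\<in>L. br (cC C) x y \<in> L"
    using assms by (auto simp: real_form_iff real_form_space_def)
  have "\<exists>a\<in>sexp L. \<exists>b\<in>sexp L. z = a + imul b" for z :: "complex^('s \<times> 'i)"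
    by (rule sexp_decompose[OF L(2)]) (simp add: comp_add comp_imul)
  moreover have "a = 0" if "a \<in> sexp L" "imul a \<in> sexp L" for a
    using that L(3) by (intro comp_ext) (auto simp: mem_sexp_iff comp_imul comp_zero)
  moreover have "\<forall>x\<in>sexp L. \<forall>y\<in>sexp L. br (cC (expC C)) x y \<in> sexp L"
    using L(1) closed by (rule sexp_br_closed[OF _ _ comp_br_cC_expC])
  ultimately show ?thesis
    using subspace_sexp[OF L(1)] unfolding real_form_iff real_form_space_def by blast
qed

lemma cartan_compact_form_eq:
  assumes L: "subspace L" "conjv ` L \<subseteq> L"
    and T: "emb ` T = range emb \<inter> L" and P: "emb ` P = range emb \<inter> imul ` L"
  shows "{emb t + imul (emb p) | t p. t \<in> T \<and> p \<in> P} = L"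
proof (intro equalityI subsetI)
  fix z assume "z \<in> {emb t + imul (emb p) | t p. t \<in> T \<and> p \<in> P}"
  then obtain t p w where "z = emb t + imul (emb p)" "emb t \<in> L" "emb p = imul w" "w \<in> L"
    using T P by blast
  then show "z \<in> L"
    using L(1) by (simp add: real_vector.subspace_diff)
next
  fix z assume z: "z \<in> L"
  then have "conjv z \<in> L"
    using L(2) by blast
  then have "(1/2) *\<^sub>R (z + conjv z) \<in> L" "(1/2) *\<^sub>R (z - conjv z) \<in> L"
    using L(1) z by (simp_all add: real_vector.subspace_add real_vector.subspace_diff
        real_vector.subspace_scale)
  moreover have "(1/2) *\<^sub>R (z + conjv z) = emb (re z)" "(1/2) *\<^sub>R (z - conjv z) = imul (emb (im z))"
    by (subst (1) emb_re_plus_imul_emb_im[symmetric], simp add: conjv_eq_re_im scaleR_2)+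
  ultimately have "emb (re z) \<in> L" "- imul (emb (im z)) \<in> L"
    using L(1) by (auto simp: real_vector.subspace_neg)
  moreover have "emb (im z) = imul (- imul (emb (im z)))"
    by (simp add: imul_minus)
  ultimately have "emb (re z) \<in> emb ` T" "emb (im z) \<in> emb ` P"
    unfolding T P by blast+
  then have "re z \<in> T" "im z \<in> P"
    by (simp_all add: inj_image_mem_iff inj_emb)
  then show "z \<in> {emb t + imul (emb p) | t p. t \<in> T \<and> p \<in> P}"
    using emb_re_plus_imul_emb_im[of z] by (metis (mono_tags, lifting) mem_Collect_eq)
qed

theorem theorem5:
  fixes C :: "'i::finite \<Rightarrow> 'i \<Rightarrow> 'i \<Rightarrow> real"
    and T0 P0 :: "(real^'i) set"
  assumes lie: "lie_constants C"
    and cartan: "cartan_decomposition C T0 P0"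
    and compact: "compact_real_lie
                    (sexp {emb t + imul (emb p) | t p. t \<in> T0 \<and> p \<in> P0}
                       :: (complex^('s::{finite, ab_semigroup_mult} \<times> 'i)) set)
                    (br (cC (expC C :: ('s \<times> 'i) \<Rightarrow> _)))"
  shows "cartan_decomposition (expC C :: ('s \<times> 'i) \<Rightarrow> _)
           (sexp T0) (sexp P0)"
proof -
  obtain Lk where T0: "real_subalgebra UNIV (br C) T0"
    and decomp: "\<forall>x. \<exists>t\<in>T0. \<exists>p\<in>P0. x = t + p"
    and Lk: "compact_real_form C Lk" "conjv ` Lk \<subseteq> Lk"
    and T: "emb ` T0 = range emb \<inter> Lk" and P: "emb ` P0 = range emb \<inter> imul ` Lk"
    using cartan unfolding cartan_decomposition_def by (elim conjE exE) (rule that)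
  have "real_form C Lk" "subspace Lk"
    using Lk(1) by (auto simp: compact_real_form_def real_form_iff real_form_space_def)
  then have compact_form: "compact_real_form (expC C) (sexp Lk :: (complex^('s \<times> 'i)) set)"
    using compact cartan_compact_form_eq[OF _ Lk(2) T P] real_form_sexp
    by (simp add: compact_real_form_def)
  have decomp_S: "\<exists>t\<in>sexp T0. \<exists>p\<in>sexp P0. x = t + p" for x :: "real^('s \<times> 'i)"
    by (rule sexp_decompose[OF decomp]) (simp add: comp_add)
  have conj: "conjv ` sexp Lk \<subseteq> (sexp Lk :: (complex^('s \<times> 'i)) set)"
    using Lk(2) by (auto simp: mem_sexp_iff comp_conjv image_subset_iff)
  have T_S: "emb ` sexp T0 = range emb \<inter> (sexp Lk :: (complex^('s \<times> 'i)) set)"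
    by (simp add: image_sexp[OF comp_emb] T sexp_Int sexp_range_emb)
  have P_S: "emb ` sexp P0 = range emb \<inter> imul ` (sexp Lk :: (complex^('s \<times> 'i)) set)"
    by (simp add: image_sexp[OF comp_emb] image_sexp[OF comp_imul] P sexp_Int sexp_range_emb)
  show ?thesis
    unfolding cartan_decomposition_def
    using semisimple_of_compact_real_form[OF compact_form] real_subalgebra_sexp[OF T0]
      decomp_S compact_form conj T_S P_S
    by blast
qed

end
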